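(* Let $\mathcal X$ be a GKM variety with a combinatorial moment graph as described in the context. Suppose that for each $T$-fixed point $v\in\mathcal X^T$ there exists at least one Knutson–Tao class $p^v\in H^*_T(\mathcal X)$. Then the classes $\{p^v: v\in\mathcal X^T\}$ form a basis of $H^*_T(\mathcal X)$ as a module over $\mathbb{C}[t_1,\ldots,t_n]$.
   Context: Let $T=(\mathbb{C}^* )^n$ and let $\mathcal X$ be a complex projective algebraic variety with an algebraic $T$-action having finitely many fixed points and finitely many one-dimensional orbits, and which is equivariantly formal (a GKM variety). The closure of each one-dimensional orbit $O$ contains exactly two fixed points $N_O,S_O$, and $T$ acts on the tangent line at $N_O$ by a weight $\alpha$ (a linear form in $t_1,\ldots,t_n$) and at $S_O$ by $-\alpha$. The moment graph has vertex set $\mathcal X^T$ and an edge between two fixed points for each one-dimensional orbit whose closure contains both. It is directed with no directed circuits, and each directed edge $v\to w$ is labeled $\alpha_{vw}$, the weight at $v$ of the corresponding orbit. Assume that for each $v$ the labels on the edges directed out of $v$ are pairwise linearly independent. By the GKM theorem, $H^*_T(\mathcal X)$ is the ring of tuples $(p_w)_{w\in\mathcal X^T}$, $p_w\in\mathbb{C}[t_1,\ldots,t_n]$, with $p_{N_O}-p_{S_O}\in\langle t_O\rangle$ for every one-dimensional orbit $O$ of weight $t_O$. Write $u\succeq_D u'$ if there is a directed path (possibly of length $0$) from $u$ to $u'$. A Knutson–Tao class for $v\in\mathcal X^T$ is a class $(p^v_w)_w\in H^*_T(\mathcal X)$ such that: (1) $p^v_v=\prod_{v\to w}\alpha_{vw}$,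 the product over all edges directed out of $v$; (2) each nonzero $p^v_w$ is homogeneous of degree $\deg p^v_v$; (3) $p^v_w=0$ whenever $w\not\succ_D v$, i.e. whenever $w\neq v$ and there is no directed path from $w$ to $v$. *)

theory Defs
  imports Complex_Main "HOL-Library.Poly_Mapping"
begin

(* Polynomials in the variables t_i, i ranging over the finite type 'n
  (so n = CARD('n)), with complex coefficients: finitely supported maps from
  monomials (exponent vectors 'n =>0 nat) to coefficients. *)
type_synonym 'n cpoly = "('n \<Rightarrow>\<^sub>0 nat) \<Rightarrow>\<^sub>0 complex"

definition mdeg :: "('n::finite \<Rightarrow>\<^sub>0 nat) \<Rightarrow> nat" where
  "mdeg m = (\<Sum>i\<in>UNIV. Poly_Mapping.lookup m i)"

definition homogeneous :: "nat \<Rightarrow> 'n::finite cpoly \<Rightarrow> bool" where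
  "homogeneous d p \<longleftrightarrow> (\<forall>m\<in>Poly_Mapping.keys p. mdeg m = d)"

definition linear_form :: "'n::finite cpoly \<Rightarrow> bool" where
  "linear_form a \<longleftrightarrow> a \<noteq> 0 \<and> homogeneous 1 a"

definition scal :: "complex \<Rightarrow> 'n cpoly \<Rightarrow> 'n cpoly" where
  "scal c p = Poly_Mapping.map (\<lambda>x. c * x) p"

definition lin_indep2 :: "'n cpoly \<Rightarrow> 'n cpoly \<Rightarrow> bool" where
  "lin_indep2 a b \<longleftrightarrow> (\<forall>c d. scal c a + scal d b = 0 \<longrightarrow> c = 0 \<and> d = 0)"

(* Combinatorial moment graph: vertices = all elements of the finite type 'v
  (the fixed points), edges = elements of the finite type 'e (one-dimensional
  orbits), each directed src e -> tgt e and labelled alpha e (the weight at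
  src e; the weight at tgt e is - alpha e). *)
definition dir_rel :: "('e \<Rightarrow> 'v) \<Rightarrow> ('e \<Rightarrow> 'v) \<Rightarrow> ('v \<times> 'v) set" where
  "dir_rel src tgt = {(src e, tgt e) | e. True}"

definition moment_graph ::
  "('e::finite \<Rightarrow> 'v::finite) \<Rightarrow> ('e \<Rightarrow> 'v) \<Rightarrow> ('e \<Rightarrow> 'n::finite cpoly) \<Rightarrow> bool" where
  "moment_graph src tgt alpha \<longleftrightarrow>
     (\<forall>e. src e \<noteq> tgt e) \<and>
     (\<forall>e. linear_form (alpha e)) \<and>
     acyclic (dir_rel src tgt) \<and>
     (\<forall>e1 e2. e1 \<noteq> e2 \<and> src e1 = src e2 \<longrightarrow> lin_indep2 (alpha e1) (alpha e2))"

(* The GKM description of H_T^*(X). *)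
definition GKM_ring ::
  "('e::finite \<Rightarrow> 'v::finite) \<Rightarrow> ('e \<Rightarrow> 'v) \<Rightarrow> ('e \<Rightarrow> 'n::finite cpoly) \<Rightarrow> ('v \<Rightarrow> 'n cpoly) set" where
  "GKM_ring src tgt alpha = {p. \<forall>e. alpha e dvd (p (src e) - p (tgt e))}"

definition KT_class ::
  "('e::finite \<Rightarrow> 'v::finite) \<Rightarrow> ('e \<Rightarrow> 'v) \<Rightarrow> ('e \<Rightarrow> 'n::finite cpoly) \<Rightarrow> 'v \<Rightarrow> ('v \<Rightarrow> 'n cpoly) \<Rightarrow> bool" where
  "KT_class src tgt alpha v p \<longleftrightarrow>
     p \<in> GKM_ring src tgt alpha \<and>
     p v = (\<Prod>e\<in>{e. src e = v}. alpha e) \<and>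
     (\<exists>d. homogeneous d (p v) \<and> (\<forall>w. p w \<noteq> 0 \<longrightarrow> homogeneous d (p w))) \<and>
     (\<forall>w. w \<noteq> v \<and> (w, v) \<notin> (dir_rel src tgt)\<^sup>* \<longrightarrow> p w = 0)"

definition is_module_basis :: "('v::finite \<Rightarrow> ('v \<Rightarrow> 'n cpoly)) \<Rightarrow> ('v \<Rightarrow> 'n cpoly) set \<Rightarrow> bool" where
  "is_module_basis b M \<longleftrightarrow> (\<forall>v. b v \<in> M) \<and>
     (\<forall>q\<in>M. \<exists>!c::'v \<Rightarrow> 'n cpoly. q = (\<lambda>w. \<Sum>v\<in>UNIV. c v * b v w))"

end

theory Submission
  imports Defs "HOL-Computational_Algebra.Factorial_Ring"
begin

text \<open>
  The Knutson--Tao classes are triangular with respect to the order of the moment graph: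
  p^v is supported on the vertices from which v can be reached, and its entry at v is the
  product of the weights of the edges leaving v, which is nonzero in the integral domain
  C[t_1, ..., t_n]. This gives linear independence. For spanning, take a class q and a vertex
  w of the support of q whose out-neighbours all lie outside the support. The GKM condition
  on each edge leaving w makes its weight divide q_w. Linear forms are prime, and pairwise
  linearly independent ones are pairwise non-associated, so their product p^w_w divides q_w;
  subtracting a multiple of p^w removes w from the support, and we conclude by induction.
\<close>

section \<open>Substitution of variables\<close>

definition pconst :: "complex \<Rightarrow> ('b \<Rightarrow>\<^sub>0 nat) \<Rightarrow>\<^sub>0 complex" where
  "pconst c = Poly_Mapping.single 0 c"

definition pvar :: "'b \<Rightarrow> ('b \<Rightarrow>\<^sub>0 nat) \<Rightarrow>\<^sub>0 complex" where
  "pvar i = Poly_Mapping.single (Poly_Mapping.single i 1) 1"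

definition monomial_eval :: "('n::finite \<Rightarrow> 'r::comm_semiring_1) \<Rightarrow> ('n \<Rightarrow>\<^sub>0 nat) \<Rightarrow> 'r" where
  "monomial_eval s m = (\<Prod>j\<in>UNIV. s j ^ Poly_Mapping.lookup m j)"

definition poly_subst ::
  "('n::finite \<Rightarrow> ('b \<Rightarrow>\<^sub>0 nat) \<Rightarrow>\<^sub>0 complex) \<Rightarrow> 'n cpoly \<Rightarrow> ('b \<Rightarrow>\<^sub>0 nat) \<Rightarrow>\<^sub>0 complex" where
  "poly_subst s f = (\<Sum>m\<in>Poly_Mapping.keys f. pconst (Poly_Mapping.lookup f m) * monomial_eval s m)"

lemma pconst_mult: "pconst (a * b) = pconst a * pconst b"
  by (simp add: pconst_def mult_single)

lemma pconst_add: "pconst (a + b) = pconst a + pconst b"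
  by (simp add: pconst_def single_add)

lemma pconst_uminus: "pconst (- a) = - pconst a"
  by (simp add: pconst_def single_uminus)

lemma pconst_0 [simp]: "pconst 0 = 0"
  by (simp add: pconst_def)

lemma pconst_1 [simp]: "pconst 1 = 1"
  by (simp add: pconst_def)

lemma pconst_times_pvar: "pconst a * pvar i = Poly_Mapping.single (Poly_Mapping.single i 1) a"
  by (simp add: pconst_def pvar_def mult_single)

lemma scal_eq_pconst_mult: "scal c p = pconst c * p"
proof -
  have "(\<lambda>x. c * x) = (*) c" by (rule ext) simp
  then show ?thesis unfolding scal_def pconst_def using mult_map_scale_conv_mult[of c p] by simp
qed

lemma poly_mapping_sum_single:
  "f = (\<Sum>m\<in>Poly_Mapping.keys f. Poly_Mapping.single m (Poly_Mapping.lookup f m))"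
  by (rule poly_mapping_eqI) (simp add: lookup_sum lookup_single when_def in_keys_iff)

lemma poly_mapping_times_sum_single:
  "f * g = (\<Sum>m\<in>Poly_Mapping.keys f. \<Sum>m'\<in>Poly_Mapping.keys g.
      Poly_Mapping.single (m + m') (Poly_Mapping.lookup f m * Poly_Mapping.lookup g m'))"
  by (subst poly_mapping_sum_single[of f], subst poly_mapping_sum_single[of g])
     (simp add: sum_product mult_single)

lemma monomial_eval_0 [simp]: "monomial_eval s 0 = 1"
  by (simp add: monomial_eval_def)

lemma monomial_eval_add: "monomial_eval s (m + m') = monomial_eval s m * monomial_eval s m'"
  by (simp add: monomial_eval_def lookup_add power_add prod.distrib)

lemma monomial_eval_single_1: "monomial_eval s (Poly_Mapping.single j 1) = s j"
proof -
  have "monomial_eval s (Poly_Mapping.single j 1) = (\<Prod>k\<in>UNIV. if k = j then s j else 1)"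
    unfolding monomial_eval_def by (rule prod.cong) (auto simp: lookup_single when_def)
  then show ?thesis by simp
qed

lemma monomial_eval_rename_vars:
  fixes \<phi> :: "'n::finite \<Rightarrow> 'b"
  shows "monomial_eval (\<lambda>j. pvar (\<phi> j)) m
     = Poly_Mapping.single (\<Sum>j\<in>UNIV. Poly_Mapping.single (\<phi> j) (Poly_Mapping.lookup m j)) 1"
proof -
  have pow: "pvar x ^ k = Poly_Mapping.single (Poly_Mapping.single x k) 1" for x and k :: nat
    by (induction k) (auto simp: pvar_def mult_single single_add[symmetric])
  have prod_single: "(\<Prod>j\<in>A. Poly_Mapping.single (a j) (1::complex)) = Poly_Mapping.single (\<Sum>j\<in>A. a j) 1"
    for A :: "'n set" and a :: "'n \<Rightarrow> 'b \<Rightarrow>\<^sub>0 nat"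
    by (induction A rule: infinite_finite_induct) (auto simp: mult_single)
  show ?thesis
    unfolding monomial_eval_def pow by (rule prod_single)
qed

lemma monomial_eval_pvar: "monomial_eval pvar m = Poly_Mapping.single m 1"
proof -
  have "(\<Sum>j\<in>UNIV. Poly_Mapping.single j (Poly_Mapping.lookup m j)) = m"
    by (rule poly_mapping_eqI) (simp add: lookup_sum lookup_single when_def)
  then show ?thesis
    using monomial_eval_rename_vars[of "\<lambda>j. j" m] by simp
qed

lemma poly_subst_keys_superset:
  assumes "finite A" "Poly_Mapping.keys f \<subseteq> A"
  shows "poly_subst s f = (\<Sum>m\<in>A. pconst (Poly_Mapping.lookup f m) * monomial_eval s m)"
  unfolding poly_subst_def
  by (rule sum.mono_neutral_left) (use assms in \<open>auto simp: in_keys_iff\<close>)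

lemma poly_subst_0 [simp]: "poly_subst s 0 = 0"
  by (simp add: poly_subst_def)

lemma poly_subst_add: "poly_subst s (f + g) = poly_subst s f + poly_subst s g"
proof -
  let ?A = "Poly_Mapping.keys f \<union> Poly_Mapping.keys g"
  show ?thesis
    by (simp add: poly_subst_keys_superset[of ?A f] poly_subst_keys_superset[of ?A g]
        poly_subst_keys_superset[OF _ keys_add] lookup_add pconst_add distrib_right sum.distrib)
qed

lemma poly_subst_sum: "poly_subst s (\<Sum>i\<in>I. F i) = (\<Sum>i\<in>I. poly_subst s (F i))"
  by (induction I rule: infinite_finite_induct) (auto simp: poly_subst_add)

lemma poly_subst_single: "poly_subst s (Poly_Mapping.single m c) = pconst c * monomial_eval s m"
  by (cases "c = 0") (auto simp: poly_subst_def)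

lemma poly_subst_mult: "poly_subst s (f * g) = poly_subst s f * poly_subst s g"
proof -
  have "poly_subst s (f * g) = (\<Sum>m\<in>Poly_Mapping.keys f. \<Sum>m'\<in>Poly_Mapping.keys g.
      pconst (Poly_Mapping.lookup f m) * monomial_eval s m *
      (pconst (Poly_Mapping.lookup g m') * monomial_eval s m'))"
    by (subst poly_mapping_times_sum_single)
       (simp add: poly_subst_sum poly_subst_single pconst_mult monomial_eval_add mult_ac)
  also have "\<dots> = poly_subst s f * poly_subst s g"
    by (simp add: poly_subst_def sum_product)
  finally show ?thesis .
qed

lemma poly_subst_pconst [simp]: "poly_subst s (pconst c) = pconst c"
  by (simp add: pconst_def poly_subst_single)

lemma poly_subst_1 [simp]: "poly_subst s 1 = 1"
  using poly_subst_pconst[of s 1] by simp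

lemma poly_subst_pvar [simp]: "poly_subst s (pvar j) = s j"
  unfolding pvar_def poly_subst_single monomial_eval_single_1 by simp

lemma poly_subst_pvar_id: "poly_subst pvar f = f"
  unfolding poly_subst_def monomial_eval_pvar
  by (subst (2) poly_mapping_sum_single) (simp add: pconst_def mult_single)

lemma poly_subst_rename_vars_inj:
  fixes \<iota> :: "'n::finite \<Rightarrow> 'b" and f :: "'n cpoly"
  assumes inj: "inj \<iota>" and vanish: "poly_subst (\<lambda>j. pvar (\<iota> j)) f = 0"
  shows "f = 0"
proof -
  define push where "push m = (\<Sum>j\<in>UNIV. Poly_Mapping.single (\<iota> j) (Poly_Mapping.lookup m j))"
    for m :: "'n \<Rightarrow>\<^sub>0 nat"
  have lookup_push: "Poly_Mapping.lookup (push m) (\<iota> j) = Poly_Mapping.lookup m j" for m j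
  proof -
    have "Poly_Mapping.lookup (push m) (\<iota> j) = (\<Sum>j'\<in>UNIV. if j' = j then Poly_Mapping.lookup m j' else 0)"
      unfolding push_def lookup_sum
      by (rule sum.cong) (auto simp: lookup_single when_def inj_eq[OF inj])
    then show ?thesis by simp
  qed
  have push_inj: "push m = push m' \<Longrightarrow> m = m'" for m m'
    by (rule poly_mapping_eqI) (metis lookup_push)
  have subst_eq: "poly_subst (\<lambda>j. pvar (\<iota> j)) f
     = (\<Sum>m\<in>Poly_Mapping.keys f. Poly_Mapping.single (push m) (Poly_Mapping.lookup f m))"
    unfolding poly_subst_def monomial_eval_rename_vars push_def by (simp add: pconst_def mult_single)
  show ?thesis
  proof (rule poly_mapping_eqI)
    fix m0
    have "Poly_Mapping.lookup f m0
        = (\<Sum>m\<in>Poly_Mapping.keys f. if m = m0 then Poly_Mapping.lookup f m else 0)"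
      by (simp add: in_keys_iff)
    also have "\<dots> = Poly_Mapping.lookup (poly_subst (\<lambda>j. pvar (\<iota> j)) f) (push m0)"
      unfolding subst_eq lookup_sum
      by (rule sum.cong) (auto simp: lookup_single when_def dest: push_inj)
    finally show "Poly_Mapping.lookup f m0 = Poly_Mapping.lookup 0 m0"
      using vanish by simp
  qed
qed

text \<open>The library makes polynomials in variables of type nat an integral domain;
  renaming the finitely many variables injectively into nat transfers this.\<close>
lemma cpoly_no_zero_divisors:
  fixes f g :: "'n::finite cpoly"
  assumes "f * g = 0"
  shows "f = 0 \<or> g = 0"
proof -
  obtain \<iota> :: "'n \<Rightarrow> nat" where inj: "inj \<iota>"
    using finite_imp_inj_to_nat_seg[of "UNIV :: 'n set"] by auto
  let ?s = "\<lambda>j. pvar (\<iota> j)"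
  have "poly_subst ?s f * poly_subst ?s g = 0"
    using assms by (metis poly_subst_mult poly_subst_0)
  then show ?thesis
    using poly_subst_rename_vars_inj[OF inj] by auto
qed

lemma cpoly_prod_nonzero:
  fixes F :: "'a \<Rightarrow> 'n::finite cpoly"
  shows "(\<And>x. x \<in> A \<Longrightarrow> F x \<noteq> 0) \<Longrightarrow> (\<Prod>x\<in>A. F x) \<noteq> 0"
  by (induction A rule: infinite_finite_induct) (auto dest: cpoly_no_zero_divisors)

section \<open>Linear forms are prime\<close>

definition var_free :: "'n \<Rightarrow> 'n cpoly \<Rightarrow> bool" where
  "var_free i f \<longleftrightarrow> (\<forall>m\<in>Poly_Mapping.keys f. Poly_Mapping.lookup m i = 0)"

lemma mdeg_1_imp_single:
  fixes m :: "'n::finite \<Rightarrow>\<^sub>0 nat"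
  assumes "mdeg m = 1" "Poly_Mapping.lookup m i \<noteq> 0"
  shows "m = Poly_Mapping.single i 1"
proof -
  have "Poly_Mapping.lookup m i + (\<Sum>j\<in>UNIV - {i}. Poly_Mapping.lookup m j) = 1"
    using assms(1) by (simp add: mdeg_def sum.remove)
  with assms(2) have "Poly_Mapping.lookup m i = 1" "(\<Sum>j\<in>UNIV - {i}. Poly_Mapping.lookup m j) = 0"
    by linarith+
  then show ?thesis
    by (intro poly_mapping_eqI) (auto simp: lookup_single when_def)
qed

lemma homogeneous_1_split_var:
  assumes "homogeneous 1 f"
  shows "var_free i (f - pconst (Poly_Mapping.lookup f (Poly_Mapping.single i 1)) * pvar i)"
  unfolding var_free_def
proof
  fix m assume "m \<in> Poly_Mapping.keys (f - pconst (Poly_Mapping.lookup f (Poly_Mapping.single i 1)) * pvar i)"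
  then have "m \<noteq> Poly_Mapping.single i 1" and "m \<in> Poly_Mapping.keys f"
    by (auto simp: pconst_times_pvar in_keys_iff lookup_minus lookup_single when_def split: if_splits)
  with assms show "Poly_Mapping.lookup m i = 0"
    using mdeg_1_imp_single by (auto simp: homogeneous_def)
qed

lemma linear_form_decompose:
  assumes "linear_form \<alpha>"
  obtains i a \<beta> where "a \<noteq> 0" "var_free i \<beta>" "\<alpha> = pconst a * pvar i + \<beta>"
proof -
  from assms obtain m where m: "m \<in> Poly_Mapping.keys \<alpha>" "mdeg m = 1"
    by (metis all_not_in_conv homogeneous_def keys_eq_empty linear_form_def)
  then obtain i where "Poly_Mapping.lookup m i \<noteq> 0"
    by (metis mdeg_def sum.neutral zero_neq_one)
  with m have "Poly_Mapping.lookup \<alpha> (Poly_Mapping.single i 1) \<noteq> 0"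
    using mdeg_1_imp_single by (auto simp: in_keys_iff)
  moreover have "var_free i (\<alpha> - pconst (Poly_Mapping.lookup \<alpha> (Poly_Mapping.single i 1)) * pvar i)"
    using assms homogeneous_1_split_var by (auto simp: linear_form_def)
  ultimately show ?thesis
    using that by fastforce
qed

lemma poly_subst_var_free:
  fixes f :: "'n::finite cpoly"
  assumes "var_free i f"
  shows "poly_subst (pvar(i := g)) f = f"
proof -
  have "poly_subst (pvar(i := g)) f = poly_subst pvar f"
    unfolding poly_subst_def
  proof (rule sum.cong[OF refl])
    fix m assume "m \<in> Poly_Mapping.keys f"
    then have "Poly_Mapping.lookup m i = 0" using assms by (simp add: var_free_def)
    then have "monomial_eval (pvar(i := g)) m = monomial_eval pvar m"
      unfolding monomial_eval_def by (intro prod.cong) auto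
    then show "pconst (Poly_Mapping.lookup f m) * monomial_eval (pvar(i := g)) m
        = pconst (Poly_Mapping.lookup f m) * monomial_eval pvar m" by simp
  qed
  then show ?thesis by (simp add: poly_subst_pvar_id)
qed

lemma pvar_minus_dvd_poly_subst:
  fixes f :: "'n::finite cpoly"
  shows "(pvar i - g) dvd (f - poly_subst (pvar(i := g)) f)"
proof -
  let ?s = "pvar(i := g)"
  have "f - poly_subst ?s f
      = (\<Sum>m\<in>Poly_Mapping.keys f. pconst (Poly_Mapping.lookup f m) * (monomial_eval pvar m - monomial_eval ?s m))"
    by (subst (1) poly_subst_pvar_id[symmetric])
       (simp add: poly_subst_def sum_subtractf right_diff_distrib)
  also have "(pvar i - g) dvd \<dots>"
  proof (rule dvd_sum)
    fix m :: "'n \<Rightarrow>\<^sub>0 nat"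
    let ?k = "Poly_Mapping.lookup m i"
    let ?rest = "\<Prod>j\<in>UNIV - {i}. pvar j ^ Poly_Mapping.lookup m j"
    have "(\<Prod>j\<in>UNIV - {i}. ?s j ^ Poly_Mapping.lookup m j) = ?rest"
      by (rule prod.cong) auto
    then have "monomial_eval pvar m - monomial_eval ?s m = (pvar i ^ ?k - g ^ ?k) * ?rest"
      unfolding monomial_eval_def prod.remove[OF finite_UNIV UNIV_I, of _ i]
      by (simp add: algebra_simps)
    moreover have "(pvar i - g) dvd (pvar i ^ ?k - g ^ ?k)"
      by (simp add: power_diff_sumr2)
    ultimately show "(pvar i - g) dvd
        pconst (Poly_Mapping.lookup f m) * (monomial_eval pvar m - monomial_eval ?s m)"
      by simp
  qed
  finally show ?thesis .
qed

lemma linear_dvd_iff_poly_subst_eq_0: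
  fixes f \<beta> :: "'n::finite cpoly"
  assumes "a \<noteq> 0" "var_free i \<beta>"
  shows "pconst a * pvar i + \<beta> dvd f \<longleftrightarrow> poly_subst (pvar(i := pconst (- (1 / a)) * \<beta>)) f = 0"
proof -
  let ?\<alpha> = "pconst a * pvar i + \<beta>" and ?g = "pconst (- (1 / a)) * \<beta>"
  have inverse_a: "pconst a * pconst (- (1 / a)) = - 1"
    "pconst (1 / a) * pconst a = 1" "pconst (- (1 / a)) = - pconst (1 / a)"
    using assms(1) by (simp_all add: pconst_uminus flip: pconst_mult)
  have "poly_subst (pvar(i := ?g)) ?\<alpha> = pconst a * pconst (- (1 / a)) * \<beta> + \<beta>"
    using poly_subst_var_free[OF assms(2)] by (simp add: poly_subst_add poly_subst_mult mult.assoc)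
  then have vanish: "poly_subst (pvar(i := ?g)) ?\<alpha> = 0"
    by (simp add: inverse_a(1))
  have "pvar i - ?g = pconst (1 / a) * ?\<alpha>"
    by (simp add: inverse_a(2,3) distrib_left flip: mult.assoc)
  then have "?\<alpha> dvd pvar i - ?g" by simp
  then have "poly_subst (pvar(i := ?g)) f = 0 \<Longrightarrow> ?\<alpha> dvd f"
    using pvar_minus_dvd_poly_subst[of i ?g f] dvd_trans by fastforce
  moreover have "?\<alpha> dvd f \<Longrightarrow> poly_subst (pvar(i := ?g)) f = 0"
    by (auto simp: poly_subst_mult vanish elim: dvdE)
  ultimately show ?thesis by blast
qed

lemma prime_elem_linear_form:
  fixes \<alpha> :: "'n::finite cpoly"
  assumes "linear_form \<alpha>"
  shows "prime_elem \<alpha>"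
proof -
  obtain i a \<beta> where decomp: "a \<noteq> 0" "var_free i \<beta>" "\<alpha> = pconst a * pvar i + \<beta>"
    using linear_form_decompose[OF assms] .
  note dvd_iff = linear_dvd_iff_poly_subst_eq_0[OF decomp(1,2), folded decomp(3)]
  show ?thesis
  proof (rule prime_elemI)
    show "\<alpha> \<noteq> 0" using assms by (simp add: linear_form_def)
    show "\<not> \<alpha> dvd 1" using dvd_iff by simp
    show "\<alpha> dvd f \<or> \<alpha> dvd g" if "\<alpha> dvd f * g" for f g
      using that cpoly_no_zero_divisors by (simp add: dvd_iff poly_subst_mult)
  qed
qed

lemma linear_form_dvd_imp_dependent:
  fixes \<alpha> \<alpha>' :: "'n::finite cpoly"
  assumes "linear_form \<alpha>" "homogeneous 1 \<alpha>'" "\<alpha> dvd \<alpha>'"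
  shows "\<not> lin_indep2 \<alpha>' \<alpha>"
proof -
  obtain i a \<beta> where decomp: "a \<noteq> 0" "var_free i \<beta>" "\<alpha> = pconst a * pvar i + \<beta>"
    using linear_form_decompose[OF assms(1)] .
  define b where "b = Poly_Mapping.lookup \<alpha>' (Poly_Mapping.single i 1)"
  define \<gamma> where "\<gamma> = \<alpha>' - pconst b * pvar i"
  have "var_free i \<gamma>"
    unfolding \<gamma>_def b_def using assms(2) by (rule homogeneous_1_split_var)
  have \<alpha>'_eq: "\<alpha>' = pconst b * pvar i + \<gamma>"
    by (simp add: \<gamma>_def)
  have const_prods: "pconst b * pconst (- (1 / a)) = - pconst (b / a)" "pconst (b / a) * pconst a = pconst b"
    using decomp(1) by (simp_all flip: pconst_mult pconst_uminus)
  have "\<alpha>' - pconst (b / a) * \<alpha> = pconst b * (pconst (- (1 / a)) * \<beta>) + \<gamma>"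
    unfolding \<alpha>'_eq decomp(3) by (simp add: const_prods distrib_left flip: mult.assoc)
  also have "\<dots> = poly_subst (pvar(i := pconst (- (1 / a)) * \<beta>)) \<alpha>'"
    using poly_subst_var_free[OF \<open>var_free i \<gamma>\<close>] by (simp add: \<alpha>'_eq poly_subst_add poly_subst_mult)
  also have "\<dots> = 0"
    using assms(3) linear_dvd_iff_poly_subst_eq_0[OF decomp(1,2)] by (simp add: decomp(3))
  finally have "scal 1 \<alpha>' + scal (- (b / a)) \<alpha> = 0"
    by (simp add: scal_eq_pconst_mult pconst_uminus)
  then show ?thesis
    unfolding lin_indep2_def by force
qed

lemma prime_elem_dvd_prod:
  fixes F :: "'a \<Rightarrow> 'b::comm_semiring_1"
  assumes "prime_elem p" "finite A" "p dvd (\<Prod>x\<in>A. F x)"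
  shows "\<exists>x\<in>A. p dvd F x"
  using assms(2,3)
proof (induction A rule: finite_induct)
  case empty
  then show ?case using prime_elem_not_unit[OF assms(1)] by simp
next
  case (insert x A)
  then show ?case using prime_elem_dvd_multD[OF assms(1)] by auto
qed

lemma prod_prime_elems_dvd:
  fixes F :: "'a \<Rightarrow> 'b::comm_semiring_1"
  assumes "finite A" "\<And>x. x \<in> A \<Longrightarrow> prime_elem (F x)"
    and "\<And>x y. x \<in> A \<Longrightarrow> y \<in> A \<Longrightarrow> x \<noteq> y \<Longrightarrow> \<not> F x dvd F y"
    and "\<And>x. x \<in> A \<Longrightarrow> F x dvd q"
  shows "(\<Prod>x\<in>A. F x) dvd q"
  using assms
proof (induction A rule: finite_induct)
  case empty
  then show ?case by simp
next
  case (insert x A)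
  then obtain r where r: "q = (\<Prod>x\<in>A. F x) * r"
    by (auto elim: dvdE)
  have prime: "prime_elem (F x)"
    using insert.prems(1) by simp
  have "\<not> F x dvd F y" if "y \<in> A" for y
    using insert.prems(2) insert.hyps(2) that by blast
  then have "\<not> F x dvd (\<Prod>x\<in>A. F x)"
    using prime_elem_dvd_prod[OF prime insert.hyps(1)] by blast
  moreover have "F x dvd (\<Prod>x\<in>A. F x) * r"
    using insert.prems(3) r by simp
  ultimately have "F x dvd r"
    using prime_elem_dvd_multD[OF prime] by blast
  then obtain r' where "r = F x * r'" ..
  with r insert.hyps show ?case
    by (simp add: mult_ac)
qed

section \<open>Triangular families\<close>

lemma finite_acyclic_obtain_sink:
  fixes R :: "('v::finite \<times> 'v) set"
  assumes "acyclic R" "x \<in> S"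
  obtains w where "w \<in> S" "\<And>y. (w, y) \<in> R \<Longrightarrow> y \<notin> S"
proof -
  have "wf (R\<inverse>)"
    using finite_acyclic_wf_converse[OF finite assms(1)] .
  then obtain w where "w \<in> S" and "\<And>y. (y, w) \<in> R\<inverse> \<Longrightarrow> y \<notin> S"
    using wfE_min[OF _ assms(2)] by blast
  then show ?thesis
    using that by simp
qed

lemma triangular_combination_eq_0:
  fixes P :: "'v::finite \<Rightarrow> 'v \<Rightarrow> 'a::comm_ring_1"
  assumes acyclic: "acyclic R"
    and triangular: "\<And>v w. w \<noteq> v \<Longrightarrow> (w, v) \<notin> R\<^sup>* \<Longrightarrow> P v w = 0"
    and diag: "\<And>v x. x * P v v = 0 \<Longrightarrow> x = 0"
    and combination: "\<And>w. (\<Sum>v\<in>UNIV. c v * P v w) = 0"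
  shows "c = (\<lambda>_. 0)"
proof (rule ccontr)
  assume "c \<noteq> (\<lambda>_. 0)"
  then obtain v where v: "v \<in> {v. c v \<noteq> 0}" by auto
  have "acyclic (R\<^sup>+)"
    using acyclic by (simp add: acyclic_def)
  then obtain z where "z \<in> {v. c v \<noteq> 0}" "\<And>y. (z, y) \<in> R\<^sup>+ \<Longrightarrow> y \<notin> {v. c v \<noteq> 0}"
    using finite_acyclic_obtain_sink[OF _ v] by blast
  then have z: "c z \<noteq> 0" and above_z: "\<And>y. (z, y) \<in> R\<^sup>+ \<Longrightarrow> c y = 0"
    by auto
  have "c v * P v z = 0" if "v \<noteq> z" for v
  proof (cases "(z, v) \<in> R\<^sup>*")
    case True
    with that have "(z, v) \<in> R\<^sup>+" by (simp add: rtrancl_eq_or_trancl)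
    then show ?thesis by (simp add: above_z)
  next
    case False
    with that show ?thesis by (simp add: triangular)
  qed
  then have "(\<Sum>v\<in>UNIV. c v * P v z) = c z * P z z"
    by (subst sum.remove[of UNIV z]) (auto intro: sum.neutral)
  with combination z diag show False by metis
qed

definition pred_closed :: "('v \<times> 'v) set \<Rightarrow> 'v set \<Rightarrow> bool" where
  "pred_closed R U \<longleftrightarrow> (\<forall>u\<in>U. \<forall>w. (w, u) \<in> R\<^sup>* \<longrightarrow> w \<in> U)"

lemma pred_closed_Diff_sink:
  assumes "pred_closed R U" and sink: "\<And>y. (w, y) \<in> R \<Longrightarrow> y \<notin> U"
  shows "pred_closed R (U - {w})"
  unfolding pred_closed_def
proof (intro ballI allI impI)
  fix u w' assume u: "u \<in> U - {w}" and "(w', u) \<in> R\<^sup>*"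
  moreover have "(w, u) \<notin> R\<^sup>*"
  proof
    assume "(w, u) \<in> R\<^sup>*"
    with u obtain y where "(w, y) \<in> R" "(y, u) \<in> R\<^sup>*"
      by (auto elim: converse_rtranclE)
    with u assms(1) sink show False
      unfolding pred_closed_def by blast
  qed
  ultimately show "w' \<in> U - {w}"
    using assms(1) unfolding pred_closed_def by blast
qed

lemma triangular_family_clear_sink:
  fixes P :: "'v \<Rightarrow> 'v \<Rightarrow> 'a::comm_ring_1"
  assumes triangular: "\<And>v w. w \<noteq> v \<Longrightarrow> (w, v) \<notin> R\<^sup>* \<Longrightarrow> P v w = 0"
    and closed: "\<And>q k w. q \<in> M \<Longrightarrow> (\<lambda>u. q u - k * P w u) \<in> M"
    and pivot: "\<And>q w. q \<in> M \<Longrightarrow> (\<And>y. (w, y) \<in> R \<Longrightarrow> q y = 0) \<Longrightarrow> P w w dvd q w"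
    and U: "pred_closed R U" "w \<in> U" and sink: "\<And>y. (w, y) \<in> R \<Longrightarrow> y \<notin> U"
    and q: "q \<in> M" "\<And>u. u \<notin> U \<Longrightarrow> q u = 0"
  shows "\<exists>k. (\<lambda>u. q u - k * P w u) \<in> M \<and> (\<forall>u. u \<notin> U - {w} \<longrightarrow> q u - k * P w u = 0)"
proof -
  have "P w w dvd q w"
    using q sink by (blast intro: pivot)
  then obtain k where k: "q w = P w w * k" ..
  have "q u - k * P w u = 0" if "u \<notin> U - {w}" for u
  proof (cases "u = w")
    case True
    then show ?thesis by (simp add: k mult.commute)
  next
    case False
    with that U have "u \<notin> U" "(u, w) \<notin> R\<^sup>*"
      unfolding pred_closed_def by blast+
    with False show ?thesis by (simp add: triangular q(2))
  qed
  with closed[OF q(1)] show ?thesis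
    by blast
qed

lemma triangular_family_spans:
  fixes P :: "'v::finite \<Rightarrow> 'v \<Rightarrow> 'a::comm_ring_1"
  assumes acyclic: "acyclic R"
    and triangular: "\<And>v w. w \<noteq> v \<Longrightarrow> (w, v) \<notin> R\<^sup>* \<Longrightarrow> P v w = 0"
    and closed: "\<And>q k w. q \<in> M \<Longrightarrow> (\<lambda>u. q u - k * P w u) \<in> M"
    and pivot: "\<And>q w. q \<in> M \<Longrightarrow> (\<And>y. (w, y) \<in> R \<Longrightarrow> q y = 0) \<Longrightarrow> P w w dvd q w"
    and "q \<in> M"
  shows "\<exists>c. q = (\<lambda>w. \<Sum>v\<in>UNIV. c v * P v w)"
proof -
  have "\<exists>c. q = (\<lambda>w. \<Sum>v\<in>UNIV. c v * P v w)"
    if "pred_closed R U" "q \<in> M" "\<And>u. u \<notin> U \<Longrightarrow> q u = 0" for U q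
    using finite[of U] that
  proof (induction U arbitrary: q rule: finite_remove_induct)
    case empty
    then have "q = (\<lambda>w. \<Sum>v\<in>UNIV. 0 * P v w)" by auto
    then show ?case by (rule exI[of _ "\<lambda>_. 0"])
  next
    case (remove U)
    from \<open>U \<noteq> {}\<close> obtain u where "u \<in> U" by blast
    then obtain w where "w \<in> U" and sink: "\<And>y. (w, y) \<in> R \<Longrightarrow> y \<notin> U"
      using finite_acyclic_obtain_sink[OF acyclic] by blast
    from triangular closed pivot remove.prems(1) \<open>w \<in> U\<close> sink remove.prems(2,3)
    have "\<exists>k. (\<lambda>u. q u - k * P w u) \<in> M \<and> (\<forall>u. u \<notin> U - {w} \<longrightarrow> q u - k * P w u = 0)"
      by (rule triangular_family_clear_sink)
    then obtain k where reduced: "(\<lambda>u. q u - k * P w u) \<in> M"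
      and vanish: "\<And>u. u \<notin> U - {w} \<Longrightarrow> q u - k * P w u = 0"
      by blast
    have "pred_closed R (U - {w})"
      using remove.prems(1) sink by (rule pred_closed_Diff_sink)
    then obtain c where "(\<lambda>u. q u - k * P w u) = (\<lambda>u. \<Sum>v\<in>UNIV. c v * P v u)"
      using remove.IH[OF \<open>w \<in> U\<close> _ reduced vanish] by blast
    then have c: "q u - k * P w u = (\<Sum>v\<in>UNIV. c v * P v u)" for u
      by (rule fun_cong)
    have "q u = (\<Sum>v\<in>UNIV. (c(w := c w + k)) v * P v u)" for u
      using c[of u] by (simp add: diff_eq_eq sum.remove[of UNIV w] distrib_right)
    then show ?case by (intro exI[of _ "c(w := c w + k)"]) (simp add: fun_eq_iff)
  qed
  moreover have "pred_closed R UNIV"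
    by (simp add: pred_closed_def)
  ultimately show ?thesis
    using \<open>q \<in> M\<close> by blast
qed

lemma triangular_family_is_module_basis:
  fixes P :: "'v::finite \<Rightarrow> 'v \<Rightarrow> 'n cpoly"
  assumes acyclic: "acyclic R"
    and triangular: "\<And>v w. w \<noteq> v \<Longrightarrow> (w, v) \<notin> R\<^sup>* \<Longrightarrow> P v w = 0"
    and diag: "\<And>v x. x * P v v = 0 \<Longrightarrow> x = 0"
    and closed: "\<And>q k w. q \<in> M \<Longrightarrow> (\<lambda>u. q u - k * P w u) \<in> M"
    and pivot: "\<And>q w. q \<in> M \<Longrightarrow> (\<And>y. (w, y) \<in> R \<Longrightarrow> q y = 0) \<Longrightarrow> P w w dvd q w"
    and members: "\<And>v. P v \<in> M"
  shows "is_module_basis P M"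
proof -
  have unique: "c = d"
    if "(\<lambda>w. \<Sum>v\<in>UNIV. c v * P v w) = (\<lambda>w. \<Sum>v\<in>UNIV. d v * P v w)" for c d
  proof -
    have "(\<Sum>v\<in>UNIV. (c v - d v) * P v w) = 0" for w
      using fun_cong[OF that, of w] by (simp add: left_diff_distrib sum_subtractf)
    with acyclic triangular diag have "(\<lambda>v. c v - d v) = (\<lambda>_. 0)"
      by (rule triangular_combination_eq_0)
    then show ?thesis
      by (simp add: fun_eq_iff)
  qed
  have "\<exists>!c. q = (\<lambda>w. \<Sum>v\<in>UNIV. c v * P v w)" if "q \<in> M" for q
  proof -
    from acyclic triangular closed pivot that
    have "\<exists>c. q = (\<lambda>w. \<Sum>v\<in>UNIV. c v * P v w)"
      by (rule triangular_family_spans)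
    then obtain c where "q = (\<lambda>w. \<Sum>v\<in>UNIV. c v * P v w)" ..
    with unique show ?thesis by blast
  qed
  with members show ?thesis
    by (simp add: is_module_basis_def)
qed

section \<open>Knutson--Tao classes\<close>

lemma GKM_ring_prod_weights_dvd:
  assumes mg: "moment_graph src tgt alpha" and q: "q \<in> GKM_ring src tgt alpha"
    and vanish: "\<And>e. src e = w \<Longrightarrow> q (tgt e) = 0"
  shows "(\<Prod>e\<in>{e. src e = w}. alpha e) dvd q w"
proof (rule prod_prime_elems_dvd)
  have linear: "linear_form (alpha e)" for e
    using mg by (simp add: moment_graph_def)
  then show "prime_elem (alpha e)" for e
    by (rule prime_elem_linear_form)
  show "\<not> alpha e1 dvd alpha e2"
    if "e1 \<in> {e. src e = w}" "e2 \<in> {e. src e = w}" "e1 \<noteq> e2" for e1 e2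
  proof
    assume "alpha e1 dvd alpha e2"
    then have "\<not> lin_indep2 (alpha e2) (alpha e1)"
      using linear_form_dvd_imp_dependent[of "alpha e1" "alpha e2"] linear[of e1] linear[of e2]
      by (simp add: linear_form_def)
    moreover have "lin_indep2 (alpha e2) (alpha e1)"
      using mg that by (simp add: moment_graph_def)
    ultimately show False by contradiction
  qed
  show "alpha e dvd q w" if "e \<in> {e. src e = w}" for e
  proof -
    have "alpha e dvd q (src e) - q (tgt e)"
      using q by (simp add: GKM_ring_def)
    with that vanish[of e] show ?thesis by simp
  qed
qed simp

lemma GKM_ring_diff_mult:
  assumes "q \<in> GKM_ring src tgt alpha" "p \<in> GKM_ring src tgt alpha"
  shows "(\<lambda>u. q u - k * p u) \<in> GKM_ring src tgt alpha"
  unfolding GKM_ring_def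
proof (intro CollectI allI)
  fix e
  have "alpha e dvd q (src e) - q (tgt e)" "alpha e dvd p (src e) - p (tgt e)"
    using assms by (simp_all add: GKM_ring_def)
  then have "alpha e dvd (q (src e) - q (tgt e)) - k * (p (src e) - p (tgt e))"
    by (simp add: dvd_diff)
  also have "(q (src e) - q (tgt e)) - k * (p (src e) - p (tgt e))
      = q (src e) - k * p (src e) - (q (tgt e) - k * p (tgt e))"
    by (simp add: algebra_simps)
  finally show "alpha e dvd q (src e) - k * p (src e) - (q (tgt e) - k * p (tgt e))" .
qed

lemma KT_class_diag_cancel:
  assumes "moment_graph src tgt alpha" "KT_class src tgt alpha v p" "x * p v = 0"
  shows "x = 0"
proof -
  have "p v = (\<Prod>e\<in>{e. src e = v}. alpha e)"
    using assms(2) by (simp add: KT_class_def)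
  also have "\<dots> \<noteq> 0"
    using assms(1) by (intro cpoly_prod_nonzero) (simp add: moment_graph_def linear_form_def)
  finally show ?thesis
    using assms(3) cpoly_no_zero_divisors by blast
qed

lemma KT_class_diag_dvd:
  assumes mg: "moment_graph src tgt alpha" and "KT_class src tgt alpha w p"
    and q: "q \<in> GKM_ring src tgt alpha"
    and vanish: "\<And>y. (w, y) \<in> dir_rel src tgt \<Longrightarrow> q y = 0"
  shows "p w dvd q w"
proof -
  have "q (tgt e) = 0" if "src e = w" for e
    using vanish[of "tgt e"] that by (auto simp: dir_rel_def)
  then have "(\<Prod>e\<in>{e. src e = w}. alpha e) dvd q w"
    by (rule GKM_ring_prod_weights_dvd[OF mg q])
  with assms(2) show ?thesis
    by (simp add: KT_class_def)
qed

theorem mainTheorem2: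
  fixes src tgt :: "'e::finite \<Rightarrow> 'v::finite"
    and alpha :: "'e \<Rightarrow> 'n::finite cpoly"
  assumes "moment_graph src tgt alpha"
    and "\<forall>v. \<exists>p. KT_class src tgt alpha v p"
  shows "\<forall>P :: 'v \<Rightarrow> ('v \<Rightarrow> 'n cpoly). (\<forall>v. KT_class src tgt alpha v (P v)) \<longrightarrow>
           is_module_basis P (GKM_ring src tgt alpha)"
proof (intro allI impI)
  fix P :: "'v \<Rightarrow> ('v \<Rightarrow> 'n cpoly)"
  assume KT: "\<forall>v. KT_class src tgt alpha v (P v)"
  then have members: "P v \<in> GKM_ring src tgt alpha" for v
    by (simp add: KT_class_def)
  show "is_module_basis P (GKM_ring src tgt alpha)"
  proof (rule triangular_family_is_module_basis[where R = "dir_rel src tgt"])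
    show "acyclic (dir_rel src tgt)"
      using assms(1) by (simp add: moment_graph_def)
    show "P v w = 0" if "w \<noteq> v" "(w, v) \<notin> (dir_rel src tgt)\<^sup>*" for v w
      using KT that by (simp add: KT_class_def)
    show "x = 0" if "x * P v v = 0" for v x
      using KT_class_diag_cancel[OF assms(1)] KT that by blast
    show "(\<lambda>u. q u - k * P w u) \<in> GKM_ring src tgt alpha"
      if "q \<in> GKM_ring src tgt alpha" for q k w
      using that members by (rule GKM_ring_diff_mult)
    show "P w w dvd q w"
      if "q \<in> GKM_ring src tgt alpha" "\<And>y. (w, y) \<in> dir_rel src tgt \<Longrightarrow> q y = 0" for q w
      using KT_class_diag_dvd[OF assms(1)] KT that by blast
  qed (rule members)
qed

end
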